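(* Let $H=(V_B\cup V_U,E)$ be a 2-LO colorable 3-uniform hypergraph with $V_B\cap V_U=\emptyset$, and let $\varepsilon>0$. Let $c_U$ be a partial LO coloring of $H$ with colors from a set $C_U$ that assigns colors exactly to the vertices of $V_U$, and let $c_B$ be an LO coloring of the induced hypergraph $H_B=(V_B,E(V_B))$ with colors from a set $C_B$. Then one can obtain an LO coloring of $H$ using at most $|C_U|+|C_B|$ colors.
   Context: An LO coloring of a 3-uniform hypergraph assigns linearly ordered colors to vertices so that in every edge the maximum color occurs at exactly one vertex. A partial LO coloring colors a subset $V_1$ of vertices so that for every edge $e$, the set $e\cap V_1$ (if nonempty) has a unique vertex of maximum color. $E(V_B)$ is the set of edges $e\in E$ with $e\subseteq V_B$; vertices of $V_B$ in no such edge may receive any color. *)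

theory Defs
  imports Complex_Main
begin

definition three_uniform :: "'a set \<Rightarrow> 'a set set \<Rightarrow> bool" where
  "three_uniform V E \<longleftrightarrow> finite V \<and> (\<forall>e\<in>E. e \<subseteq> V \<and> card e = 3)"

definition unique_max :: "('a \<Rightarrow> 'c::linorder) \<Rightarrow> 'a set \<Rightarrow> bool" where
  "unique_max c S \<longleftrightarrow> (\<exists>v\<in>S. \<forall>u\<in>S. u \<noteq> v \<longrightarrow> c u < c v)"

definition lo_coloring :: "'a set \<Rightarrow> 'a set set \<Rightarrow> 'c::linorder set \<Rightarrow> ('a \<Rightarrow> 'c) \<Rightarrow> bool" where
  "lo_coloring V E C c \<longleftrightarrow> c ` V \<subseteq> C \<and> (\<forall>e\<in>E. unique_max c e)"

definition partial_lo_coloring ::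
  "'a set \<Rightarrow> 'a set set \<Rightarrow> 'a set \<Rightarrow> 'c::linorder set \<Rightarrow> ('a \<Rightarrow> 'c) \<Rightarrow> bool" where
  "partial_lo_coloring V E V1 C c \<longleftrightarrow> V1 \<subseteq> V \<and> c ` V1 \<subseteq> C \<and>
     (\<forall>e\<in>E. e \<inter> V1 \<noteq> {} \<longrightarrow> unique_max c (e \<inter> V1))"

definition induced_edges :: "'a set set \<Rightarrow> 'a set \<Rightarrow> 'a set set" where
  "induced_edges E W = {e \<in> E. e \<subseteq> W}"

definition k_lo_colorable :: "nat \<Rightarrow> 'a set \<Rightarrow> 'a set set \<Rightarrow> bool" where
  "k_lo_colorable k V E \<longleftrightarrow> (\<exists>c :: 'a \<Rightarrow> nat. lo_coloring V E {..<k} c)"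

end

theory Submission
  imports Defs
begin

text \<open>Replace every colour by its rank in its (finite) palette and shift the ranks of the colours
  of \<open>V\<^sub>U\<close> above all ranks of \<open>C\<^sub>B\<close>. An edge meeting \<open>V\<^sub>U\<close> then has its unique maximum in
  \<open>V\<^sub>U\<close>, by the partial colouring; an edge inside \<open>V\<^sub>B\<close> has it by the colouring of \<open>H\<^sub>B\<close>.\<close>

definition rank_in :: "'c::linorder set \<Rightarrow> 'c \<Rightarrow> nat" where
  "rank_in C x = card {y \<in> C. y < x}"

lemma strict_mono_on_rank_in:
  assumes "finite C"
  shows "strict_mono_on C (rank_in C)"
proof (rule strict_mono_onI)
  fix a b assume "a \<in> C" "b \<in> C" "a < b"
  then have "{y \<in> C. y < a} \<subset> {y \<in> C. y < b}" by auto
  then show "rank_in C a < rank_in C b"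
    unfolding rank_in_def using assms by (intro psubset_card_mono) auto
qed

lemma rank_in_less_card:
  assumes "finite C" "x \<in> C"
  shows "rank_in C x < card C"
proof -
  have "{y \<in> C. y < x} \<subset> C" using assms(2) by auto
  then show ?thesis unfolding rank_in_def using assms(1) by (intro psubset_card_mono) auto
qed

lemma unique_max_transfer:
  assumes "unique_max c S" and "\<And>u v. u \<in> S \<Longrightarrow> v \<in> S \<Longrightarrow> c u < c v \<Longrightarrow> d u < d v"
  shows "unique_max d S"
  using assms unfolding unique_max_def by metis

lemma unique_max_if_top_part:
  assumes "unique_max c (S \<inter> U)" and "\<And>u w. u \<in> S - U \<Longrightarrow> w \<in> S \<inter> U \<Longrightarrow> c u < c w"
  shows "unique_max c S"
proof -
  obtain v where v: "v \<in> S \<inter> U" "\<forall>u\<in>S \<inter> U. u \<noteq> v \<longrightarrow> c u < c v"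
    using assms(1) unfolding unique_max_def by blast
  have "c u < c v" if "u \<in> S" "u \<noteq> v" for u
    using that v assms(2)[of u v] by (cases "u \<in> U") auto
  then show ?thesis using v(1) unfolding unique_max_def by blast
qed

lemma unique_max_layered:
  assumes "e \<subseteq> VB \<union> VU" "VB \<inter> VU = {}"
    and "e \<inter> VU \<noteq> {} \<Longrightarrow> unique_max c (e \<inter> VU)"
    and "e \<subseteq> VB \<Longrightarrow> unique_max c e"
    and "\<And>u w. u \<in> VB \<Longrightarrow> w \<in> VU \<Longrightarrow> c u < c w"
  shows "unique_max c e"
proof (cases "e \<inter> VU = {}")
  case True
  then show ?thesis using assms(1,4) by blast
next
  case False
  then show ?thesis using assms by (intro unique_max_if_top_part[of c e VU]) auto
qed

definition stacked_coloring ::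
  "'d::linorder set \<Rightarrow> ('a \<Rightarrow> 'd) \<Rightarrow> 'a set \<Rightarrow> 'c::linorder set \<Rightarrow> ('a \<Rightarrow> 'c) \<Rightarrow> 'a \<Rightarrow> nat" where
  "stacked_coloring CB cB VU CU cU v =
     (if v \<in> VU then card CB + rank_in CU (cU v) else rank_in CB (cB v))"

lemma stacked_coloring_lower_layer:
  assumes "finite CB" "cB v \<in> CB" "v \<notin> VU"
  shows "stacked_coloring CB cB VU CU cU v < card CB"
  using assms rank_in_less_card[OF assms(1,2)] unfolding stacked_coloring_def by simp

lemma stacked_coloring_upper_layer:
  assumes "finite CU" "cU v \<in> CU" "v \<in> VU"
  shows "card CB \<le> stacked_coloring CB cB VU CU cU v"
    and "stacked_coloring CB cB VU CU cU v < card CB + card CU"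
  using assms rank_in_less_card[OF assms(1,2)] unfolding stacked_coloring_def by simp_all

lemma lo_coloring_stacked_coloring:
  assumes "\<And>e. e \<in> E \<Longrightarrow> e \<subseteq> VB \<union> VU" "VB \<inter> VU = {}" "finite CU" "finite CB"
    and "partial_lo_coloring (VB \<union> VU) E VU CU cU"
    and "lo_coloring VB (induced_edges E VB) CB cB"
  shows "lo_coloring (VB \<union> VU) E {..<card CB + card CU} (stacked_coloring CB cB VU CU cU)"
proof -
  let ?c = "stacked_coloring CB cB VU CU cU"
  have cU: "cU ` VU \<subseteq> CU" "\<And>e. e \<in> E \<Longrightarrow> e \<inter> VU \<noteq> {} \<Longrightarrow> unique_max cU (e \<inter> VU)"
    using assms(5) unfolding partial_lo_coloring_def by auto
  have cB: "cB ` VB \<subseteq> CB" "\<And>e. e \<in> E \<Longrightarrow> e \<subseteq> VB \<Longrightarrow> unique_max cB e"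
    using assms(6) unfolding lo_coloring_def induced_edges_def by auto
  have low: "?c u < card CB" if "u \<in> VB" for u
    using that cB(1) assms(2,4) by (intro stacked_coloring_lower_layer) auto
  have high: "card CB \<le> ?c w" "?c w < card CB + card CU" if "w \<in> VU" for w
    using that cU(1) assms(3) by (intro stacked_coloring_upper_layer; auto)+
  have "unique_max ?c e" if e: "e \<in> E" for e
  proof (rule unique_max_layered[of e VB VU])
    show "e \<subseteq> VB \<union> VU" using assms(1) e .
    show "VB \<inter> VU = {}" by (fact assms(2))
    show "unique_max ?c (e \<inter> VU)" if "e \<inter> VU \<noteq> {}"
    proof (rule unique_max_transfer[OF cU(2)[OF e that]])
      fix u v assume "u \<in> e \<inter> VU" "v \<in> e \<inter> VU" "cU u < cU v"
      moreover from this have "cU u \<in> CU" "cU v \<in> CU" using cU(1) by auto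
      ultimately show "?c u < ?c v"
        using strict_mono_onD[OF strict_mono_on_rank_in[OF assms(3)]]
        by (simp add: stacked_coloring_def)
    qed
    show "unique_max ?c e" if "e \<subseteq> VB"
    proof (rule unique_max_transfer[OF cB(2)[OF e that]])
      fix u v assume uv: "u \<in> e" "v \<in> e" "cB u < cB v"
      then have "u \<in> VB - VU" "v \<in> VB - VU" using that assms(2) by auto
      moreover from this have "cB u \<in> CB" "cB v \<in> CB" using cB(1) by auto
      ultimately show "?c u < ?c v"
        using uv(3) strict_mono_onD[OF strict_mono_on_rank_in[OF assms(4)]]
        by (simp add: stacked_coloring_def)
    qed
    show "?c u < ?c w" if "u \<in> VB" "w \<in> VU" for u w
      using low[OF that(1)] high(1)[OF that(2)] by linarith
  qed
  moreover have "?c ` (VB \<union> VU) \<subseteq> {..<card CB + card CU}"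
    using low high(2) by fastforce
  ultimately show ?thesis unfolding lo_coloring_def by blast
qed

theorem proposition2p6:
  fixes VB VU :: "'a set" and E :: "'a set set"
    and CU :: "'c::linorder set" and CB :: "'d::linorder set"
    and cU :: "'a \<Rightarrow> 'c" and cB :: "'a \<Rightarrow> 'd" and \<epsilon> :: real
  assumes "three_uniform (VB \<union> VU) E"
    and "k_lo_colorable 2 (VB \<union> VU) E"
    and "VB \<inter> VU = {}"
    and "\<epsilon> > 0"
    and "finite CU" and "finite CB"
    and "partial_lo_coloring (VB \<union> VU) E VU CU cU"
    and "lo_coloring VB (induced_edges E VB) CB cB"
  shows "\<exists>c :: 'a \<Rightarrow> nat. lo_coloring (VB \<union> VU) E (c ` (VB \<union> VU)) c \<and>
           card (c ` (VB \<union> VU)) \<le> card CU + card CB"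
proof -
  let ?V = "VB \<union> VU" and ?c = "stacked_coloring CB cB VU CU cU"
  have "lo_coloring ?V E {..<card CB + card CU} ?c"
    using assms(1,3,5-8) unfolding three_uniform_def by (intro lo_coloring_stacked_coloring) auto
  moreover from this have "card (?c ` ?V) \<le> card CU + card CB"
    unfolding lo_coloring_def by (metis add.commute card_lessThan card_mono finite_lessThan)
  ultimately show ?thesis unfolding lo_coloring_def by blast
qed

end
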